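(* Let $A$ be a self-adjoint operator on a separable Hilbert space $\mathfrak H$ with dense domain $D(A)$. Let $K\ge1$ and for each $n$ let $(x_n^1,\dots,x_n^K)$ be an orthonormal system of vectors in $D(A)$ such that $x_n^j\rightharpoonup0$ weakly as $n\to\infty$ for every $j=1,\dots,K$. Let $W_n=\mathrm{span}(x_n^1,\dots,x_n^K)$. If $\lambda\in\mathbb R$ satisfies $\lim_{n\to\infty}\mathrm{dist}(\lambda,\sigma(A_{|W_n}))=0$, then $\lambda\in\mathrm{Spu}(A)\cup\sigma(A)$.
   Context: $D(A)$ carries the graph norm $\|x\|_{D(A)}^2=\|x\|^2+\|Ax\|^2$. For a finite-dimensional subspace $V\subset D(A)$, $P_V$ denotes the orthogonal projector onto $V$ and $A_{|V}$ the self-adjoint operator on $V$ given by the restriction of $P_VAP_V$ to $V$. A real number $\lambda$ is a spurious eigenvalue of $A$ (written $\lambda\in\mathrm{Spu}(A)$) if there is a sequence of finite-dimensional subspaces $V_n\subset D(A)$ with $V_n\subset V_{n+1}$ such that (i) $\bigcup_n V_n$ is dense in $D(A)$ for the graph norm; (ii) $\lim_{n\to\infty}\mathrm{dist}(\lambda,\sigma(A_{|V_n}))=0$; (iii) $\lambda\notin\sigma(A)$. *)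

theory Defs
  imports "HOL-Analysis.Analysis"
begin

text \<open>A complex Hilbert space, presented as a real Hilbert space together with an
orthogonal complex structure cJ (multiplication by the imaginary unit).\<close>

class chilbert = real_inner + complete_space +
  fixes cJ :: "'a \<Rightarrow> 'a"
  assumes cJ_add: "cJ (x + y) = cJ x + cJ y"
    and cJ_scaleR: "cJ (r *\<^sub>R x) = r *\<^sub>R cJ x"
    and cJ_cJ: "cJ (cJ x) = - x"
    and cJ_inner: "inner (cJ x) (cJ y) = inner x y"

text \<open>Complex scalar multiplication and the complex inner product
(conjugate-linear in the first, linear in the second argument).\<close>

definition scaleC :: "complex \<Rightarrow> 'a::chilbert \<Rightarrow> 'a" where
  "scaleC c x = Re c *\<^sub>R x + Im c *\<^sub>R cJ x"

definition cinner :: "'a::chilbert \<Rightarrow> 'a \<Rightarrow> complex" where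
  "cinner x y = Complex (inner x y) (- inner x (cJ y))"

definition csubspace :: "'a::chilbert set \<Rightarrow> bool" where
  "csubspace S \<longleftrightarrow> 0 \<in> S \<and> (\<forall>x\<in>S. \<forall>y\<in>S. x + y \<in> S) \<and> (\<forall>c. \<forall>x\<in>S. scaleC c x \<in> S)"

definition cspan :: "'a::chilbert set \<Rightarrow> 'a set" where
  "cspan S = {x. \<exists>F c. finite F \<and> F \<subseteq> S \<and> x = (\<Sum>v\<in>F. scaleC (c v) v)}"

definition fin_dim_csubspace :: "'a::chilbert set \<Rightarrow> bool" where
  "fin_dim_csubspace V \<longleftrightarrow> (\<exists>B. finite B \<and> V = cspan B)"

definition cproj :: "'a::chilbert set \<Rightarrow> 'a \<Rightarrow> 'a" where
  "cproj V x = (THE p. p \<in> V \<and> (\<forall>v\<in>V. cinner v (x - p) = 0))"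

definition self_adjoint :: "'a::chilbert set \<Rightarrow> ('a \<Rightarrow> 'a) \<Rightarrow> bool" where
  "self_adjoint D A \<longleftrightarrow>
     csubspace D \<and> closure D = UNIV \<and>
     (\<forall>x\<in>D. \<forall>y\<in>D. A (x + y) = A x + A y) \<and>
     (\<forall>c. \<forall>x\<in>D. A (scaleC c x) = scaleC c (A x)) \<and>
     (\<forall>x\<in>D. \<forall>y\<in>D. cinner (A x) y = cinner x (A y)) \<and>
     (\<forall>y z. (\<forall>x\<in>D. cinner (A x) y = cinner x z) \<longrightarrow> y \<in> D)"

definition op_spectrum :: "'a::chilbert set \<Rightarrow> ('a \<Rightarrow> 'a) \<Rightarrow> complex set" where
  "op_spectrum D A = {z. \<not> (inj_on (\<lambda>x. A x - scaleC z x) D \<and>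
       (\<lambda>x. A x - scaleC z x) ` D = UNIV \<and>
       (\<exists>C. \<forall>x\<in>D. norm x \<le> C * norm (A x - scaleC z x)))}"

text \<open>Spectrum of the compression A_{|V} = P_V A P_V restricted to V (its eigenvalues).\<close>
definition compr_spectrum :: "'a::chilbert set \<Rightarrow> ('a \<Rightarrow> 'a) \<Rightarrow> complex set" where
  "compr_spectrum V A = {\<mu>. \<exists>v\<in>V. v \<noteq> 0 \<and> cproj V (A v) = scaleC \<mu> v}"

definition Spu :: "'a::chilbert set \<Rightarrow> ('a \<Rightarrow> 'a) \<Rightarrow> real set" where
  "Spu D A = {lam. \<exists>V :: nat \<Rightarrow> 'a set.
      (\<forall>n. fin_dim_csubspace (V n) \<and> V n \<subseteq> D \<and> V n \<subseteq> V (Suc n)) \<and>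
      (\<forall>x\<in>D. \<forall>e>0. \<exists>n. \<exists>y\<in>V n.
          sqrt ((norm (x - y))\<^sup>2 + (norm (A x - A y))\<^sup>2) < e) \<and>
      (\<lambda>n. infdist (complex_of_real lam) (compr_spectrum (V n) A)) \<longlonglongrightarrow> 0 \<and>
      complex_of_real lam \<notin> op_spectrum D A}"

end

theory Submission
  imports Defs "Jordan_Normal_Form.Spectral_Radius"
begin

text \<open>
  Since lim dist(\<lambda>, \<sigma>(A_{|W_n})) = 0, the compressions A_{|W_n} have eigenvalues
  \<mu>_n \<rightarrow> \<lambda>; their normalised eigenvectors z_n \<in> W_n are weakly null (the orthonormal systems
  are) and have Rayleigh quotients \<langle>z_n, A z_n\<rangle> \<rightarrow> \<lambda>.  Far-out members of such a sequence form
  almost eigenfamilies (almost orthonormal, almost diagonalising A with eigenvalue \<lambda>), and a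
  nontrivial combination of card G + 1 of them orthogonal to a finite set G is an approximate
  eigenvector.  The Rayleigh quotient of a vector w orthogonal to U and to A U is an eigenvalue
  of the compression of A to span (U \<union> {w}).  Alternately adjoining the members of a graph-norm
  dense sequence of D (separability) and such vectors w gives increasing, exhausting subspaces
  whose compressions have eigenvalues converging to \<lambda>, so \<lambda> \<in> Spu(A) unless \<lambda> \<in> \<sigma>(A).
\<close>

section \<open>The complex structure\<close>

lemma linear_cJ: "linear (cJ :: 'a::chilbert \<Rightarrow> 'a)"
  by (rule linearI) (simp_all add: cJ_add cJ_scaleR)

lemmas cJ_0[simp] = linear_0[OF linear_cJ]
lemmas cJ_diff[simp] = linear_diff[OF linear_cJ]
declare cJ_add[simp] cJ_scaleR[simp] cJ_cJ[simp]

lemma inner_cJ_left: "inner (cJ x) y = - inner x (cJ (y::'a::chilbert))"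
proof -
  have "inner (cJ x) y = inner (cJ (cJ x)) (cJ y)" by (simp only: cJ_inner)
  thus ?thesis by simp
qed

lemma inner_cJ_self[simp]: "inner x (cJ (x::'a::chilbert)) = 0"
  using inner_cJ_left[of x x] by (simp add: inner_commute)

lemma norm_cJ[simp]: "norm (cJ (x::'a::chilbert)) = norm x"
  by (simp add: norm_eq_sqrt_inner cJ_inner)

lemma Re_cinner[simp]: "Re (cinner x y) = inner x y" by (simp add: cinner_def)
lemma Im_cinner[simp]: "Im (cinner x y) = - inner x (cJ y)" by (simp add: cinner_def)

lemma scaleC_real[simp]: "scaleC (complex_of_real r) x = r *\<^sub>R x"
  by (simp add: scaleC_def)
lemma scaleC_zero_right[simp]: "scaleC c 0 = 0" by (simp add: scaleC_def)
lemma scaleC_add_right: "scaleC c (x + y) = scaleC c x + scaleC c y"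
  by (simp add: scaleC_def algebra_simps)
lemma scaleC_scaleC: "scaleC c (scaleC d x) = scaleC (c * d) x"
  by (simp add: scaleC_def algebra_simps)
lemma scaleC_sum_right: "scaleC c (sum f S) = (\<Sum>i\<in>S. scaleC c (f i))"
  by (induction S rule: infinite_finite_induct) (simp_all add: scaleC_add_right)

lemma cinner_zero_left[simp]: "cinner 0 x = 0"
  by (rule complex_eqI) simp_all
lemma cinner_zero_right[simp]: "cinner x 0 = 0"
  by (rule complex_eqI) simp_all
lemma cinner_add_right: "cinner x (y + z) = cinner x y + cinner x z"
  by (rule complex_eqI) (simp_all add: inner_add_right)
lemma cinner_add_left: "cinner (x + y) z = cinner x z + cinner y z"
  by (rule complex_eqI) (simp_all add: inner_add_left)
lemma cinner_diff_right: "cinner x (y - z) = cinner x y - cinner x z"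
  by (rule complex_eqI) (simp_all add: inner_diff_right)
lemma cinner_scaleC_right: "cinner x (scaleC c y) = c * cinner x y"
  by (rule complex_eqI) (simp_all add: scaleC_def inner_add_right algebra_simps)
lemma cinner_scaleC_left: "cinner (scaleC c x) y = cnj c * cinner x y"
  by (rule complex_eqI)
    (simp_all add: scaleC_def inner_add_left inner_cJ_left cJ_inner algebra_simps)
lemma cinner_self: "cinner x x = complex_of_real ((norm x)\<^sup>2)"
  by (rule complex_eqI) (simp_all add: power2_norm_eq_inner)
lemma cinner_commute: "cinner y x = cnj (cinner x y)"
proof -
  have "inner y (cJ x) = - inner x (cJ y)" by (metis inner_commute inner_cJ_left)
  thus ?thesis by (intro complex_eqI) (simp_all add: inner_commute)
qed
lemma cinner_sum_left: "cinner (sum f S) y = (\<Sum>i\<in>S. cinner (f i) y)"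
  by (induction S rule: infinite_finite_induct) (simp_all add: cinner_add_left)
lemma cinner_sum_right: "cinner y (sum f S) = (\<Sum>i\<in>S. cinner y (f i))"
  by (induction S rule: infinite_finite_induct) (simp_all add: cinner_add_right)

lemma cinner_eq_0_iff: "cinner g w = 0 \<longleftrightarrow> inner g w = 0 \<and> inner (cJ g) w = 0"
  by (simp add: complex_eq_iff inner_cJ_left)

section \<open>Complex subspaces, spans and orthogonal projections\<close>

lemma csubspace_0: "csubspace V \<Longrightarrow> 0 \<in> V"
  by (simp add: csubspace_def)
lemma csubspace_add: "csubspace V \<Longrightarrow> x \<in> V \<Longrightarrow> y \<in> V \<Longrightarrow> x + y \<in> V"
  by (simp add: csubspace_def)
lemma csubspace_scaleC: "csubspace V \<Longrightarrow> x \<in> V \<Longrightarrow> scaleC c x \<in> V"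
  by (simp add: csubspace_def)
lemma csubspace_scaleR: "csubspace V \<Longrightarrow> x \<in> V \<Longrightarrow> r *\<^sub>R x \<in> V"
  using csubspace_scaleC[of V x "complex_of_real r"] by simp
lemma csubspace_diff: "csubspace V \<Longrightarrow> x \<in> V \<Longrightarrow> y \<in> V \<Longrightarrow> x - y \<in> V"
  using csubspace_add[of V x "scaleC (-1) y"] csubspace_scaleC[of V y "-1"]
  by (simp add: scaleC_def)
lemma csubspace_sum: "csubspace V \<Longrightarrow> (\<And>i. i \<in> I \<Longrightarrow> f i \<in> V) \<Longrightarrow> sum f I \<in> V"
  by (induction I rule: infinite_finite_induct) (auto simp: csubspace_0 csubspace_add)

lemma csubspace_cspan: "csubspace (cspan S)"
  unfolding csubspace_def
proof (intro conjI ballI allI)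
  show "0 \<in> cspan S" unfolding cspan_def by (intro CollectI exI[of _ "{}"]) simp
next
  fix x y assume "x \<in> cspan S" "y \<in> cspan S"
  then obtain F1 c1 F2 c2 where F1: "finite F1" "F1 \<subseteq> S" "x = (\<Sum>v\<in>F1. scaleC (c1 v) v)"
    and F2: "finite F2" "F2 \<subseteq> S" "y = (\<Sum>v\<in>F2. scaleC (c2 v) v)"
    unfolding cspan_def by blast
  define c where "c v = (if v \<in> F1 then c1 v else 0) + (if v \<in> F2 then c2 v else 0)" for v
  have "(\<Sum>v\<in>F1 \<union> F2. scaleC (c v) v) = (\<Sum>v\<in>F1 \<union> F2. scaleC (if v \<in> F1 then c1 v else 0) v)
      + (\<Sum>v\<in>F1 \<union> F2. scaleC (if v \<in> F2 then c2 v else 0) v)"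
    by (simp add: c_def scaleC_def algebra_simps sum.distrib)
  also have "(\<Sum>v\<in>F1 \<union> F2. scaleC (if v \<in> F1 then c1 v else 0) v) = x"
    unfolding F1(3) by (rule sum.mono_neutral_cong_right) (use F1 F2 in \<open>auto simp: scaleC_def\<close>)
  also have "(\<Sum>v\<in>F1 \<union> F2. scaleC (if v \<in> F2 then c2 v else 0) v) = y"
    unfolding F2(3) by (rule sum.mono_neutral_cong_right) (use F1 F2 in \<open>auto simp: scaleC_def\<close>)
  finally show "x + y \<in> cspan S" unfolding cspan_def
    by (intro CollectI exI[of _ "F1 \<union> F2"] exI[of _ c]) (use F1 F2 in auto)
next
  fix c x assume "x \<in> cspan S"
  then obtain F c1 where F: "finite F" "F \<subseteq> S" "x = (\<Sum>v\<in>F. scaleC (c1 v) v)"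
    unfolding cspan_def by blast
  have "scaleC c x = (\<Sum>v\<in>F. scaleC (c * c1 v) v)"
    unfolding F(3) by (simp add: scaleC_sum_right scaleC_scaleC)
  thus "scaleC c x \<in> cspan S" unfolding cspan_def
    by (intro CollectI exI[of _ F] exI[of _ "\<lambda>v. c * c1 v"]) (use F in auto)
qed

lemma cspan_superset: "x \<in> S \<Longrightarrow> x \<in> cspan S"
  unfolding cspan_def by (intro CollectI exI[of _ "{x}"] exI[of _ "\<lambda>_. 1"]) (simp add: scaleC_def)

lemma cspan_mono: "S \<subseteq> T \<Longrightarrow> cspan S \<subseteq> cspan T"
  unfolding cspan_def by blast

lemma cspan_subset: "csubspace D \<Longrightarrow> S \<subseteq> D \<Longrightarrow> cspan S \<subseteq> D"
  unfolding cspan_def by (auto intro!: csubspace_sum csubspace_scaleC)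

lemma cspan_orth: "(\<And>b. b \<in> S \<Longrightarrow> cinner b z = 0) \<Longrightarrow> v \<in> cspan S \<Longrightarrow> cinner v z = 0"
  unfolding cspan_def by (auto simp: cinner_sum_left cinner_scaleC_left subset_iff)

lemma cproj_eqI:
  assumes V: "csubspace V" and p: "p \<in> V" and orth: "\<And>v. v \<in> V \<Longrightarrow> cinner v (z - p) = 0"
  shows "cproj V z = p"
  unfolding cproj_def
proof (rule the_equality)
  show "p \<in> V \<and> (\<forall>v\<in>V. cinner v (z - p) = 0)" using p orth by auto
next
  fix q assume q: "q \<in> V \<and> (\<forall>v\<in>V. cinner v (z - q) = 0)"
  have d: "q - p \<in> V" using csubspace_diff[OF V] q p by auto
  have "cinner (q - p) (z - p) - cinner (q - p) (z - q) = 0" using orth[OF d] q d by auto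
  hence "cinner (q - p) (q - p) = 0" by (simp add: cinner_diff_right algebra_simps)
  hence "norm (q - p) = 0" by (simp add: cinner_self)
  thus "q = p" by simp
qed


context
  fixes D :: "'a::chilbert set" and A :: "'a \<Rightarrow> 'a"
  assumes sa: "self_adjoint D A"
begin

lemma csubspace_domain: "csubspace D" using sa by (simp add: self_adjoint_def)

lemma sa_cinner: "x \<in> D \<Longrightarrow> y \<in> D \<Longrightarrow> cinner (A x) y = cinner x (A y)"
  using sa unfolding self_adjoint_def by blast

lemma sa_inner: "x \<in> D \<Longrightarrow> y \<in> D \<Longrightarrow> inner (A x) y = inner x (A y)"
  using arg_cong[OF sa_cinner, of x y Re] by simp

lemma A_scaleC: "x \<in> D \<Longrightarrow> A (scaleC c x) = scaleC c (A x)"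
  using sa unfolding self_adjoint_def by blast

lemma A_scaleR: "x \<in> D \<Longrightarrow> A (r *\<^sub>R x) = r *\<^sub>R A x"
  using A_scaleC[of x "complex_of_real r"] by simp

lemma A_sum: "(\<And>i. i \<in> I \<Longrightarrow> f i \<in> D) \<Longrightarrow> A (sum f I) = (\<Sum>i\<in>I. A (f i))"
proof (induction I rule: infinite_finite_induct)
  case (insert i I)
  have "sum f I \<in> D" using insert by (intro csubspace_sum[OF csubspace_domain]) auto
  thus ?case using insert sa by (simp add: self_adjoint_def)
qed (use A_scaleR[OF csubspace_0[OF csubspace_domain], of 0] in simp_all)

lemma cinner_A_real: "w \<in> D \<Longrightarrow> cinner w (A w) = complex_of_real (inner w (A w))"
  using sa_cinner[of w w] cinner_commute[of w "A w"] by (auto simp: complex_eq_iff)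

end

section \<open>Orthonormal systems and compressions to their spans\<close>

definition orthonormal_on :: "'i set \<Rightarrow> ('i \<Rightarrow> 'a::chilbert) \<Rightarrow> bool" where
  "orthonormal_on I u \<longleftrightarrow> (\<forall>i\<in>I. \<forall>j\<in>I. cinner (u i) (u j) = (if i = j then 1 else 0))"

context
  fixes I :: "'i set" and u :: "'i \<Rightarrow> 'a::chilbert"
  assumes on: "orthonormal_on I u" and fin: "finite I"
begin

lemma orthonormal_norm: "i \<in> I \<Longrightarrow> norm (u i) = 1"
proof -
  assume i: "i \<in> I"
  have "cinner (u i) (u i) = 1" using on i by (simp add: orthonormal_on_def)
  hence "(norm (u i))\<^sup>2 = 1" by (metis cinner_self of_real_eq_1_iff)
  thus ?thesis using norm_ge_zero[of "u i"] by (auto simp: power2_eq_1_iff)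
qed

lemma orthonormal_coeff:
  assumes i: "i \<in> I"
  shows "cinner (u i) (\<Sum>j\<in>I. scaleC (c j) (u j)) = c i"
proof -
  have "cinner (u i) (\<Sum>j\<in>I. scaleC (c j) (u j)) = (\<Sum>j\<in>I. if j = i then c i else 0)"
    unfolding cinner_sum_right
    by (rule sum.cong) (use on i in \<open>auto simp: orthonormal_on_def cinner_scaleC_right\<close>)
  thus ?thesis using fin i by simp
qed

lemma orthonormal_comb_in_span: "(\<Sum>j\<in>I. scaleC (c j) (u j)) \<in> cspan (u ` I)"
  by (intro csubspace_sum[OF csubspace_cspan] csubspace_scaleC[OF csubspace_cspan]
      cspan_superset) auto

lemma cproj_orthonormal:
  "cproj (cspan (u ` I)) y = (\<Sum>j\<in>I. scaleC (cinner (u j) y) (u j))"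
proof (rule cproj_eqI[OF csubspace_cspan orthonormal_comb_in_span])
  fix v assume "v \<in> cspan (u ` I)"
  thus "cinner v (y - (\<Sum>j\<in>I. scaleC (cinner (u j) y) (u j))) = 0"
    by (rule cspan_orth[rotated]) (auto simp: cinner_diff_right orthonormal_coeff)
qed

lemma cproj_orthonormal_orth:
  "v \<in> cspan (u ` I) \<Longrightarrow> cinner v (y - cproj (cspan (u ` I)) y) = 0"
  unfolding cproj_orthonormal
  by (rule cspan_orth[rotated]) (auto simp: cinner_diff_right orthonormal_coeff)

lemma orthonormal_expansion:
  assumes "v \<in> cspan (u ` I)"
  shows "v = (\<Sum>j\<in>I. scaleC (cinner (u j) v) (u j))"
  using cproj_eqI[OF csubspace_cspan assms, of v] cproj_orthonormal[of v] by simp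

lemma compr_eigenvalue_by_coordinates:
  assumes w: "w \<in> cspan (u ` I)" "w \<noteq> 0"
    and coord: "\<And>i. i \<in> I \<Longrightarrow> cinner (u i) (A w) = k * cinner (u i) w"
  shows "k \<in> compr_spectrum (cspan (u ` I)) A"
proof -
  have "cproj (cspan (u ` I)) (A w) = (\<Sum>j\<in>I. scaleC k (scaleC (cinner (u j) w) (u j)))"
    unfolding cproj_orthonormal by (rule sum.cong) (simp_all add: coord scaleC_scaleC)
  also have "\<dots> = scaleC k w"
    by (subst (2) orthonormal_expansion[OF w(1)]) (simp add: scaleC_sum_right)
  finally show ?thesis unfolding compr_spectrum_def using w by blast
qed

lemma rayleigh_compr_eigvec:
  assumes v: "v \<in> cspan (u ` I)" and eig: "cproj (cspan (u ` I)) (A v) = scaleC \<mu> v"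
  shows "inner v (A v) = Re \<mu> * (norm v)\<^sup>2"
proof -
  have "cinner v (A v) = cinner v (scaleC \<mu> v)"
    using cproj_orthonormal_orth[OF v, of "A v"] eig by (simp add: cinner_diff_right)
  from arg_cong[OF this, of Re] show ?thesis by (simp add: cinner_scaleC_right cinner_self)
qed

text \<open>The real inner products of a unit vector in the span are controlled by those of the
  system; this transfers weak convergence from the system to the span.\<close>
lemma inner_orthonormal_span_bound:
  assumes z: "z \<in> cspan (u ` I)" and zn: "norm z = 1"
  shows "\<bar>inner f z\<bar> \<le> (\<Sum>j\<in>I. \<bar>inner f (u j)\<bar> + \<bar>inner (cJ f) (u j)\<bar>)"
proof -
  have "inner f z = (\<Sum>j\<in>I. Re (cinner (u j) z) * inner f (u j)
        + Im (cinner (u j) z) * inner f (cJ (u j)))"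
    by (subst orthonormal_expansion[OF z])
      (simp add: inner_sum_right scaleC_def inner_add_right inner_diff_right)
  also have "\<dots> = (\<Sum>j\<in>I. inner (u j) z * inner f (u j)
        + (- inner (u j) (cJ z)) * (- inner (cJ f) (u j)))"
    by (intro sum.cong refl)
      (simp add: inner_commute[of f "cJ _"] inner_cJ_left inner_commute[of "cJ f"])
  also have "\<bar>\<dots>\<bar> \<le> (\<Sum>j\<in>I. \<bar>inner (u j) z * inner f (u j)
        + (- inner (u j) (cJ z)) * (- inner (cJ f) (u j))\<bar>)"
    by (rule sum_abs)
  also have "\<dots> \<le> (\<Sum>j\<in>I. \<bar>inner f (u j)\<bar> + \<bar>inner (cJ f) (u j)\<bar>)"
  proof (rule sum_mono)
    fix j assume j: "j \<in> I"
    have "\<bar>inner (u j) z\<bar> \<le> 1" "\<bar>inner (u j) (cJ z)\<bar> \<le> 1"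
      using Cauchy_Schwarz_ineq2[of "u j" z] Cauchy_Schwarz_ineq2[of "u j" "cJ z"]
        orthonormal_norm[OF j] zn by simp_all
    hence "\<bar>inner (u j) z * inner f (u j)\<bar> \<le> \<bar>inner f (u j)\<bar>"
      "\<bar>(- inner (u j) (cJ z)) * (- inner (cJ f) (u j))\<bar> \<le> \<bar>inner (cJ f) (u j)\<bar>"
      unfolding abs_mult by (simp_all add: mult_left_le_one_le)
    thus "\<bar>inner (u j) z * inner f (u j) + (- inner (u j) (cJ z)) * (- inner (cJ f) (u j))\<bar>
        \<le> \<bar>inner f (u j)\<bar> + \<bar>inner (cJ f) (u j)\<bar>"
      by linarith
  qed
  finally show ?thesis .
qed

end

text \<open>The compression of A to the span of a nonempty finite orthonormal system in D has an
  eigenvalue: it is represented by a square complex matrix, which has one.\<close>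
lemma compr_spectrum_nonempty:
  fixes u :: "nat \<Rightarrow> 'a::chilbert"
  assumes sa: "self_adjoint D A" and K: "K \<ge> 1"
    and on: "orthonormal_on {1..K} u" and uD: "u ` {1..K} \<subseteq> D"
  shows "compr_spectrum (cspan (u ` {1..K})) A \<noteq> {}"
proof -
  define M where "M = mat K K (\<lambda>(i, j). cinner (u (Suc i)) (A (u (Suc j))))"
  have M: "M \<in> carrier_mat K K" by (simp add: M_def)
  obtain k where "k \<in> spectrum M" using spectrum_non_empty[OF M] K by auto
  then obtain v where v: "v \<in> carrier_vec K" "v \<noteq> 0\<^sub>v K" "M *\<^sub>v v = k \<cdot>\<^sub>v v"
    unfolding spectrum_def eigenvalue_def eigenvector_def using M by auto
  define c where "c j = v $ (j - 1)" for j
  define w where "w = (\<Sum>j\<in>{1..K}. scaleC (c j) (u j))"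
  have wW: "w \<in> cspan (u ` {1..K})"
    unfolding w_def by (rule orthonormal_comb_in_span[OF on finite_atLeastAtMost])
  have cw: "cinner (u i) w = c i" if "i \<in> {1..K}" for i
    unfolding w_def using orthonormal_coeff[OF on finite_atLeastAtMost that] by simp
  have "w \<noteq> 0"
  proof
    assume "w = 0"
    hence "v $ i = 0" if "i < K" for i using cw[of "Suc i"] that by (simp add: c_def)
    hence "v = 0\<^sub>v K" using v(1) by (intro eq_vecI) auto
    thus False using v(2) by simp
  qed
  text \<open>The coordinates of A w are those of M v = k v.\<close>
  have "cinner (u i) (A w) = k * cinner (u i) w" if i: "i \<in> {1..K}" for i
  proof -
    have "A w = (\<Sum>j\<in>{1..K}. scaleC (c j) (A (u j)))"
      unfolding w_def using uD csubspace_scaleC[OF csubspace_domain[OF sa]]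
      by (subst A_sum[OF sa]) (auto simp: A_scaleC[OF sa] image_subset_iff intro!: sum.cong)
    hence "cinner (u i) (A w) = (\<Sum>j<K. c (Suc j) * cinner (u i) (A (u (Suc j))))"
      by (simp add: cinner_sum_right cinner_scaleC_right sum.atLeast1_atMost_eq
          del: sum.cl_ivl_Suc)
    also have "\<dots> = (M *\<^sub>v v) $ (i - 1)"
      using i M v(1) by (auto simp: scalar_prod_def M_def c_def lessThan_atLeast0 intro!: sum.cong)
    also have "\<dots> = k * c i"
    proof -
      have "i - 1 < dim_vec v" using i v(1) by auto
      thus ?thesis using v(3) by (simp add: c_def)
    qed
    finally show ?thesis using cw[OF i] by simp
  qed
  thus ?thesis
    using compr_eigenvalue_by_coordinates[OF on finite_atLeastAtMost wW \<open>w \<noteq> 0\<close>] by blast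
qed

section \<open>A weakly null sequence with Rayleigh quotients converging to \<lambda>\<close>

definition weakly_null_rayleigh_seq ::
    "'a::chilbert set \<Rightarrow> ('a \<Rightarrow> 'a) \<Rightarrow> real \<Rightarrow> (nat \<Rightarrow> 'a) \<Rightarrow> bool" where
  "weakly_null_rayleigh_seq D A lam z \<longleftrightarrow>
     (\<forall>n. z n \<in> D \<and> norm (z n) = 1) \<and> (\<forall>f. (\<lambda>n. inner f (z n)) \<longlonglongrightarrow> 0) \<and>
     (\<lambda>n. inner (z n) (A (z n))) \<longlonglongrightarrow> lam"

lemma infdist_approx:
  assumes "S \<noteq> {}" "e > 0"
  shows "\<exists>a\<in>S. dist x a < infdist x S + e"
proof -
  have "(INF a\<in>S. dist x a) < infdist x S + e" using assms by (simp add: infdist_notempty)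
  moreover have "bdd_below ((\<lambda>a. dist x a) ` S)" by (rule bdd_belowI[of _ 0]) auto
  ultimately show ?thesis using cINF_less_iff[OF assms(1)] by blast
qed

lemma converging_compr_eigenpairs:
  assumes ne: "\<And>n. compr_spectrum (W n) A \<noteq> {}"
    and lim: "(\<lambda>n. infdist (complex_of_real lam) (compr_spectrum (W n) A)) \<longlonglongrightarrow> 0"
  shows "\<exists>\<mu> v. (\<forall>n. v n \<in> W n \<and> v n \<noteq> 0 \<and> cproj (W n) (A (v n)) = scaleC (\<mu> n) (v n)) \<and>
    \<mu> \<longlonglongrightarrow> complex_of_real lam"
proof -
  define d where "d n = infdist (complex_of_real lam) (compr_spectrum (W n) A)" for n
  have "\<exists>\<mu> v. v \<in> W n \<and> v \<noteq> 0 \<and> cproj (W n) (A v) = scaleC \<mu> v \<and>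
      dist (complex_of_real lam) \<mu> < d n + inverse (real (Suc n))" for n
    using infdist_approx[OF ne, of "inverse (real (Suc n))"]
    unfolding compr_spectrum_def d_def by fastforce
  then obtain \<mu> v where eig: "\<And>n. v n \<in> W n \<and> v n \<noteq> 0 \<and> cproj (W n) (A (v n)) = scaleC (\<mu> n) (v n)"
    and close: "\<And>n. dist (complex_of_real lam) (\<mu> n) < d n + inverse (real (Suc n))"
    by metis
  have "\<mu> \<longlonglongrightarrow> complex_of_real lam"
  proof (rule LIM_zero_cancel, rule Lim_null_comparison)
    show "\<forall>\<^sub>F n in sequentially. norm (\<mu> n - complex_of_real lam) \<le> d n + inverse (real (Suc n))"
      using close by (auto simp: dist_norm norm_minus_commute less_imp_le)
    show "(\<lambda>n. d n + inverse (real (Suc n))) \<longlonglongrightarrow> 0"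
      using tendsto_add[OF lim LIMSEQ_inverse_real_of_nat] unfolding d_def by simp
  qed
  thus ?thesis using eig by blast
qed

text \<open>Normalised eigenvectors of the compressions A_{|W_n} for eigenvalues \<mu>_n \<rightarrow> \<lambda> form
  a weakly null Rayleigh sequence: they are weakly null because the orthonormal systems are.\<close>
lemma weakly_null_rayleigh_seq_exists:
  fixes x :: "nat \<Rightarrow> nat \<Rightarrow> 'a::chilbert"
  assumes sa: "self_adjoint D A" and K: "K \<ge> 1"
    and on: "\<And>n. orthonormal_on {1..K} (x n)" and xD: "\<And>n. x n ` {1..K} \<subseteq> D"
    and weak0: "\<And>j y. j \<in> {1..K} \<Longrightarrow> (\<lambda>n. cinner y (x n j)) \<longlonglongrightarrow> 0"
    and lim: "(\<lambda>n. infdist (complex_of_real lam) (compr_spectrum (cspan (x n ` {1..K})) A))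
               \<longlonglongrightarrow> 0"
  shows "\<exists>z. weakly_null_rayleigh_seq D A lam z"
proof -
  define W where "W n = cspan (x n ` {1..K})" for n
  obtain \<mu> v where v: "\<And>n. v n \<in> W n" "\<And>n. v n \<noteq> 0"
    and eig: "\<And>n. cproj (W n) (A (v n)) = scaleC (\<mu> n) (v n)"
    and mu_lim: "\<mu> \<longlonglongrightarrow> complex_of_real lam"
    using converging_compr_eigenpairs[of W A lam] compr_spectrum_nonempty[OF sa K on xD] lim
    unfolding W_def by metis
  have WD: "W n \<subseteq> D" for n
    unfolding W_def using cspan_subset[OF csubspace_domain[OF sa] xD] .
  define z where "z n = (1 / norm (v n)) *\<^sub>R v n" for n
  have zW: "z n \<in> W n" for n
    unfolding z_def W_def using csubspace_scaleR[OF csubspace_cspan] v(1) unfolding W_def by blast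
  have zn: "norm (z n) = 1" for n using v(2) by (simp add: z_def)
  have "inner (z n) (A (z n)) = Re (\<mu> n)" for n
  proof -
    have "inner (v n) (A (v n)) = Re (\<mu> n) * (norm (v n))\<^sup>2"
      using rayleigh_compr_eigvec[OF on finite_atLeastAtMost] v(1) eig unfolding W_def by blast
    moreover have "v n \<in> D" using v(1) WD by blast
    ultimately show ?thesis using v(2)
      by (simp add: z_def A_scaleR[OF sa] power2_eq_square field_simps)
  qed
  hence ray: "(\<lambda>n. inner (z n) (A (z n))) \<longlonglongrightarrow> lam"
    using tendsto_Re[OF mu_lim] by simp
  have weak: "(\<lambda>n. inner f (z n)) \<longlonglongrightarrow> 0" for f
  proof (rule Lim_null_comparison)
    show "\<forall>\<^sub>F n in sequentially. norm (inner f (z n)) \<le>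
        (\<Sum>j\<in>{1..K}. \<bar>inner f (x n j)\<bar> + \<bar>inner (cJ f) (x n j)\<bar>)"
      using inner_orthonormal_span_bound[OF on finite_atLeastAtMost] zW zn
      unfolding W_def by auto
    have "(\<lambda>n. inner g (x n j)) \<longlonglongrightarrow> 0" if "j \<in> {1..K}" for g j
      using tendsto_Re[OF weak0[OF that, of g]] by simp
    thus "(\<lambda>n. \<Sum>j\<in>{1..K}. \<bar>inner f (x n j)\<bar> + \<bar>inner (cJ f) (x n j)\<bar>) \<longlonglongrightarrow> 0"
      by (intro tendsto_null_sum tendsto_add_zero tendsto_rabs_zero)
  qed
  show ?thesis
    unfolding weakly_null_rayleigh_seq_def using zW WD zn weak ray by blast
qed

section \<open>Approximate eigenvectors orthogonal to a finite set\<close>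

definition approx_eigvec :: "'a::chilbert set \<Rightarrow> ('a \<Rightarrow> 'a) \<Rightarrow> real \<Rightarrow> real \<Rightarrow> 'a \<Rightarrow> bool" where
  "approx_eigvec D A lam \<epsilon> w \<longleftrightarrow>
     w \<in> D \<and> w \<noteq> 0 \<and> \<bar>inner w (A w) - lam * (norm w)\<^sup>2\<bar> \<le> \<epsilon> * (norm w)\<^sup>2"

definition has_orth_approx_eigvecs :: "'a::chilbert set \<Rightarrow> ('a \<Rightarrow> 'a) \<Rightarrow> real \<Rightarrow> bool" where
  "has_orth_approx_eigvecs D A lam \<longleftrightarrow>
     (\<forall>G \<epsilon>. finite G \<longrightarrow> \<epsilon> > 0 \<longrightarrow> (\<exists>w. approx_eigvec D A lam \<epsilon> w \<and> (\<forall>g\<in>G. inner g w = 0)))"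

text \<open>More vectors than linear constraints: some nontrivial combination satisfies them all.
  Induction on the constraints, eliminating one vector per constraint.\<close>
lemma nontrivial_orthogonal_combination:
  fixes G :: "'a::real_inner set" and y :: "'b \<Rightarrow> 'a"
  assumes "finite G" "finite F" "card G < card F"
  shows "\<exists>a. (\<exists>j\<in>F. a j \<noteq> 0) \<and> (\<forall>g\<in>G. inner g (\<Sum>j\<in>F. a j *\<^sub>R y j) = 0)"
  using assms
proof (induction G arbitrary: F y rule: finite_induct)
  case empty
  then obtain j where "j \<in> F" by fastforce
  thus ?case by (intro exI[of _ "\<lambda>_. 1"]) auto
next
  case (insert g G)
  have cG: "card G < card F" using insert by simp
  show ?case
  proof (cases "\<forall>j\<in>F. inner g (y j) = 0")
    case True
    obtain a where a: "\<exists>j\<in>F. a j \<noteq> 0" "\<forall>g\<in>G. inner g (\<Sum>j\<in>F. a j *\<^sub>R y j) = 0"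
      using insert.IH[OF insert.prems(1) cG] by blast
    have "inner g (\<Sum>j\<in>F. a j *\<^sub>R y j) = 0" using True by (simp add: inner_sum_right)
    thus ?thesis using a by auto
  next
    case False
    then obtain k where k: "k \<in> F" "inner g (y k) \<noteq> 0" by auto
    text \<open>Replace each y j by its correction y' j orthogonal to g, and drop y k.\<close>
    define F' where "F' = F - {k}"
    define y' where "y' j = y j - (inner g (y j) / inner g (y k)) *\<^sub>R y k" for j
    have fF': "finite F'" using insert by (simp add: F'_def)
    have cF': "card G < card F'" using insert k by (simp add: F'_def)
    obtain a' where a': "\<exists>j\<in>F'. a' j \<noteq> 0" "\<forall>g\<in>G. inner g (\<Sum>j\<in>F'. a' j *\<^sub>R y' j) = 0"
      using insert.IH[OF fF' cF', of y'] by blast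
    define a where "a j = (if j = k then - (\<Sum>i\<in>F'. a' i * inner g (y i)) / inner g (y k)
      else a' j)" for j
    have "(\<Sum>j\<in>F. a j *\<^sub>R y j) = a k *\<^sub>R y k + (\<Sum>j\<in>F'. a j *\<^sub>R y j)"
      unfolding F'_def using k insert.prems(1) by (simp add: sum.remove)
    also have "(\<Sum>j\<in>F'. a j *\<^sub>R y j) = (\<Sum>j\<in>F'. a' j *\<^sub>R y j)"
      by (rule sum.cong) (auto simp: a_def F'_def)
    also have "a k *\<^sub>R y k + (\<Sum>j\<in>F'. a' j *\<^sub>R y j) = (\<Sum>j\<in>F'. a' j *\<^sub>R y' j)"
      by (simp add: a_def y'_def scaleR_diff_right sum_subtractf scaleR_sum_left[symmetric]
          sum_divide_distrib[symmetric] algebra_simps)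
    finally have e: "(\<Sum>j\<in>F. a j *\<^sub>R y j) = (\<Sum>j\<in>F'. a' j *\<^sub>R y' j)" .
    have "inner g (\<Sum>j\<in>F'. a' j *\<^sub>R y' j) = 0"
      using k(2) by (simp add: inner_sum_right y'_def inner_diff_right)
    moreover have "\<exists>j\<in>F. a j \<noteq> 0" using a' by (auto simp: a_def F'_def)
    ultimately show ?thesis using a' e by auto
  qed
qed

lemma quadratic_form_near_diagonal:
  fixes a :: "nat \<Rightarrow> real"
  assumes E: "\<And>i j. i < N \<Longrightarrow> j < N \<Longrightarrow> \<bar>E i j - (if i = j then c else 0)\<bar> \<le> \<eta>"
  shows "\<bar>(\<Sum>i<N. \<Sum>j<N. a i * a j * E i j) - c * (\<Sum>i<N. (a i)\<^sup>2)\<bar>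
    \<le> \<eta> * N * (\<Sum>i<N. (a i)\<^sup>2)"
proof -
  have row: "(\<Sum>j<N. a i * a j * (if i = j then c else 0)) = (if i < N then c * (a i)\<^sup>2 else 0)"
    for i
  proof -
    have "(\<Sum>j<N. a i * a j * (if i = j then c else 0)) = (\<Sum>j<N. if j = i then c * (a i)\<^sup>2 else 0)"
      by (rule sum.cong) (auto simp: power2_eq_square)
    thus ?thesis by (simp add: sum.delta')
  qed
  have "(\<Sum>i<N. \<Sum>j<N. a i * a j * E i j) - c * (\<Sum>i<N. (a i)\<^sup>2)
      = (\<Sum>i<N. \<Sum>j<N. a i * a j * (E i j - (if i = j then c else 0)))"
    by (simp add: row right_diff_distrib sum_subtractf sum_distrib_left)
  also have "\<bar>\<dots>\<bar> \<le> (\<Sum>i<N. \<Sum>j<N. \<bar>a i * a j * (E i j - (if i = j then c else 0))\<bar>)"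
    by (rule order.trans[OF sum_abs]) (intro sum_mono sum_abs)
  also have "\<dots> \<le> (\<Sum>i<N. \<Sum>j<N. \<bar>a i\<bar> * \<bar>a j\<bar> * \<eta>)"
  proof (intro sum_mono)
    fix i j assume "i \<in> {..<N}" "j \<in> {..<N}"
    thus "\<bar>a i * a j * (E i j - (if i = j then c else 0))\<bar> \<le> \<bar>a i\<bar> * \<bar>a j\<bar> * \<eta>"
      unfolding abs_mult by (intro mult_left_mono E) auto
  qed
  also have "\<dots> = \<eta> * (\<Sum>i<N. \<bar>a i\<bar>)\<^sup>2"
    by (simp add: power2_eq_square sum_distrib_left sum_distrib_right algebra_simps)
  also have "\<dots> \<le> \<eta> * ((\<Sum>i<N. \<bar>a i\<bar>\<^sup>2) * N)"
  proof (cases "N = 0")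
    case False
    hence "0 \<le> \<eta>" using E[of 0 0] by auto
    thus ?thesis using sum_squared_le_sum_of_squares[of "\<lambda>i. \<bar>a i\<bar>" "{..<N}"]
      by (intro mult_left_mono) auto
  qed simp
  finally show ?thesis by (simp add: algebra_simps)
qed

definition almost_eigenfamily ::
    "('a::chilbert \<Rightarrow> 'a) \<Rightarrow> real \<Rightarrow> real \<Rightarrow> nat \<Rightarrow> (nat \<Rightarrow> 'a) \<Rightarrow> bool" where
  "almost_eigenfamily A lam \<eta> N y \<longleftrightarrow> (\<forall>i<N. \<forall>j<N.
     \<bar>inner (y i) (y j) - (if i = j then 1 else 0)\<bar> \<le> \<eta> \<and>
     \<bar>inner (y i) (A (y j)) - (if i = j then lam else 0)\<bar> \<le> \<eta>)"

context
  fixes D :: "'a::chilbert set" and A :: "'a \<Rightarrow> 'a"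
  assumes sa: "self_adjoint D A"
begin

text \<open>Appending a unit vector v that is \<eta>-almost orthogonal to the y_i and to the A y_i and
  has Rayleigh quotient \<eta>-close to \<lambda> preserves the property (both matrices are symmetric).\<close>
lemma almost_eigenfamily_extend:
  assumes yD: "\<And>j. y j \<in> D" and y: "almost_eigenfamily A lam \<eta> N y"
    and vD: "v \<in> D" and vn: "norm v = 1" and eta: "\<eta> \<ge> 0"
    and new: "\<And>i. i < N \<Longrightarrow> \<bar>inner (y i) v\<bar> \<le> \<eta> \<and> \<bar>inner (A (y i)) v\<bar> \<le> \<eta>"
    and diag: "\<bar>inner v (A v) - lam\<bar> \<le> \<eta>"
  shows "almost_eigenfamily A lam \<eta> (Suc N) (y(N := v))"
proof -
  define y' where "y' = y(N := v)"
  have y'D: "y' j \<in> D" for j using yD vD by (simp add: y'_def)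
  have symA: "inner (y' i) (A (y' j)) = inner (y' j) (A (y' i))" for i j
    using sa_inner[OF sa y'D y'D, of j i] by (simp add: inner_commute)
  have entry: "\<bar>inner (y' i) (y' j) - (if i = j then 1 else 0)\<bar> \<le> \<eta> \<and>
     \<bar>inner (y' i) (A (y' j)) - (if i = j then lam else 0)\<bar> \<le> \<eta>"
    if "i \<le> j" "j < Suc N" for i j
  proof (cases "j < N")
    case True thus ?thesis using y that by (simp add: y'_def almost_eigenfamily_def)
  next
    case False
    hence j: "j = N" using that by simp
    show ?thesis
    proof (cases "i = N")
      case True thus ?thesis using j vn diag eta by (simp add: y'_def power2_norm_eq_inner[symmetric])
    next
      case False
      hence "i < N" using that j by simp
      thus ?thesis using new j sa_inner[OF sa yD vD] by (simp add: y'_def)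
    qed
  qed
  have "\<bar>inner (y' i) (y' j) - (if i = j then 1 else 0)\<bar> \<le> \<eta> \<and>
     \<bar>inner (y' i) (A (y' j)) - (if i = j then lam else 0)\<bar> \<le> \<eta>"
    if "i < Suc N" "j < Suc N" for i j
  proof (cases "i \<le> j")
    case False
    moreover have "inner (y' i) (y' j) = inner (y' j) (y' i)" by (rule inner_commute)
    ultimately show ?thesis using entry[of j i] that symA[of i j] by simp
  qed (use entry that in blast)
  thus ?thesis unfolding almost_eigenfamily_def y'_def by blast
qed

lemma almost_eigenfamily_combination:
  fixes y :: "nat \<Rightarrow> 'a" and a :: "nat \<Rightarrow> real"
  assumes yD: "\<And>j. y j \<in> D" and y: "almost_eigenfamily A lam \<eta> N y"
  defines "w \<equiv> \<Sum>j<N. a j *\<^sub>R y j" and "s \<equiv> \<Sum>i<N. (a i)\<^sup>2"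
  shows "w \<in> D" "\<bar>(norm w)\<^sup>2 - s\<bar> \<le> \<eta> * N * s" "\<bar>inner w (A w) - lam * s\<bar> \<le> \<eta> * N * s"
proof -
  show "w \<in> D" unfolding w_def
    by (intro csubspace_sum[OF csubspace_domain[OF sa]] csubspace_scaleR[OF csubspace_domain[OF sa]] yD)
  have Aw: "A w = (\<Sum>j<N. a j *\<^sub>R A (y j))" unfolding w_def
    by (subst A_sum[OF sa])
      (use yD csubspace_scaleR[OF csubspace_domain[OF sa]] in \<open>auto simp: A_scaleR[OF sa]\<close>)
  have "(norm w)\<^sup>2 = (\<Sum>i<N. \<Sum>j<N. a i * a j * inner (y i) (y j))"
    unfolding power2_norm_eq_inner w_def
    by (simp add: inner_sum_left inner_sum_right sum_distrib_left mult.assoc,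
        intro sum.cong refl, simp add: inner_commute)
  moreover have "\<bar>(\<Sum>i<N. \<Sum>j<N. a i * a j * inner (y i) (y j)) - 1 * s\<bar> \<le> \<eta> * N * s"
    unfolding s_def by (rule quadratic_form_near_diagonal) (use y in \<open>auto simp: almost_eigenfamily_def\<close>)
  ultimately show "\<bar>(norm w)\<^sup>2 - s\<bar> \<le> \<eta> * N * s" by simp
  have "inner w (A w) = (\<Sum>i<N. \<Sum>j<N. a i * a j * inner (y i) (A (y j)))"
    unfolding Aw by (simp add: w_def inner_sum_left inner_sum_right sum_distrib_left mult.assoc,
        subst sum.swap, simp add: mult.left_commute)
  moreover have "\<bar>(\<Sum>i<N. \<Sum>j<N. a i * a j * inner (y i) (A (y j))) - lam * s\<bar> \<le> \<eta> * N * s"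
    unfolding s_def by (rule quadratic_form_near_diagonal) (use y in \<open>auto simp: almost_eigenfamily_def\<close>)
  ultimately show "\<bar>inner w (A w) - lam * s\<bar> \<le> \<eta> * N * s" by simp
qed

end

lemma rayleigh_perturbation:
  fixes n r s lam \<delta> \<epsilon> :: real
  assumes s: "s > 0" and n: "\<bar>n - s\<bar> \<le> \<delta> * s" and r: "\<bar>r - lam * s\<bar> \<le> \<delta> * s"
    and small: "\<delta> \<le> 1/2" "\<delta> * (1 + \<bar>lam\<bar>) \<le> \<epsilon> / 2"
  shows "n > 0" "\<bar>r - lam * n\<bar> \<le> \<epsilon> * n"
proof -
  have "\<delta> * s \<le> 1/2 * s" using small(1) s by (intro mult_right_mono) auto
  hence big: "s \<le> 2 * n" using n by linarith
  thus "n > 0" using s by linarith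
  have "r - lam * n = (r - lam * s) - lam * (n - s)" by (simp add: algebra_simps)
  hence "\<bar>r - lam * n\<bar> \<le> \<bar>r - lam * s\<bar> + \<bar>lam\<bar> * \<bar>n - s\<bar>"
    using abs_triangle_ineq4[of "r - lam * s" "lam * (n - s)"] by (simp add: abs_mult)
  also have "\<dots> \<le> \<delta> * s + \<bar>lam\<bar> * (\<delta> * s)" using r n by (intro add_mono mult_left_mono) auto
  also have "\<dots> = \<delta> * (1 + \<bar>lam\<bar>) * s" by (simp add: algebra_simps)
  also have "\<dots> \<le> \<epsilon> / 2 * s" using small(2) s by (intro mult_right_mono) auto
  also have "\<dots> \<le> \<epsilon> * n"
  proof -
    have "0 \<le> \<delta> * s" using n abs_ge_zero[of "n - s"] by linarith
    hence "0 \<le> \<delta> * (1 + \<bar>lam\<bar>)" using s by (simp add: zero_le_mult_iff)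
    hence "0 \<le> \<epsilon>" using small(2) by linarith
    thus ?thesis using mult_left_mono[OF big, of "\<epsilon> / 2"] by simp
  qed
  finally show "\<bar>r - lam * n\<bar> \<le> \<epsilon> * n" .
qed

context
  fixes D :: "'a::chilbert set" and A :: "'a \<Rightarrow> 'a" and lam :: real and z :: "nat \<Rightarrow> 'a"
  assumes sa: "self_adjoint D A" and z: "weakly_null_rayleigh_seq D A lam z"
begin

lemma far_member:
  fixes y :: "nat \<Rightarrow> 'a" and N :: nat
  assumes eta: "\<eta> > 0"
  shows "\<exists>n. (\<forall>i<N. \<bar>inner (y i) (z n)\<bar> \<le> \<eta> \<and> \<bar>inner (A (y i)) (z n)\<bar> \<le> \<eta>) \<and>
    \<bar>inner (z n) (A (z n)) - lam\<bar> \<le> \<eta>"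
proof -
  have weak: "(\<lambda>n. inner f (z n)) \<longlonglongrightarrow> 0" for f
    using z by (simp add: weakly_null_rayleigh_seq_def)
  have "\<forall>\<^sub>F n in sequentially. \<bar>inner (y i) (z n)\<bar> \<le> \<eta> \<and> \<bar>inner (A (y i)) (z n)\<bar> \<le> \<eta>" for i
    using tendstoD[OF weak[of "y i"] eta] tendstoD[OF weak[of "A (y i)"] eta]
    by eventually_elim auto
  hence "\<forall>\<^sub>F n in sequentially. \<forall>i\<in>{..<N}. \<bar>inner (y i) (z n)\<bar> \<le> \<eta> \<and> \<bar>inner (A (y i)) (z n)\<bar> \<le> \<eta>"
    by (intro eventually_ball_finite) auto
  moreover have "\<forall>\<^sub>F n in sequentially. dist (inner (z n) (A (z n))) lam < \<eta>"
    using z eta by (auto simp: weakly_null_rayleigh_seq_def tendsto_iff)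
  ultimately have "\<forall>\<^sub>F n in sequentially.
      (\<forall>i<N. \<bar>inner (y i) (z n)\<bar> \<le> \<eta> \<and> \<bar>inner (A (y i)) (z n)\<bar> \<le> \<eta>) \<and>
      \<bar>inner (z n) (A (z n)) - lam\<bar> \<le> \<eta>"
    by eventually_elim (auto simp: dist_real_def)
  thus ?thesis unfolding eventually_sequentially by blast
qed

lemma almost_eigenfamily_exists:
  assumes eta: "\<eta> > 0"
  shows "\<exists>y. (\<forall>j. y j \<in> D) \<and> almost_eigenfamily A lam \<eta> N y"
proof (induction N)
  case 0 show ?case using z by (auto simp: weakly_null_rayleigh_seq_def almost_eigenfamily_def)
next
  case (Suc N)
  then obtain y where yD: "\<forall>j. y j \<in> D" and y: "almost_eigenfamily A lam \<eta> N y" by blast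
  obtain n where n: "\<forall>i<N. \<bar>inner (y i) (z n)\<bar> \<le> \<eta> \<and> \<bar>inner (A (y i)) (z n)\<bar> \<le> \<eta>"
    "\<bar>inner (z n) (A (z n)) - lam\<bar> \<le> \<eta>"
    using far_member[OF eta] by blast
  have zD: "z n \<in> D" and zn: "norm (z n) = 1" using z by (simp_all add: weakly_null_rayleigh_seq_def)
  have "almost_eigenfamily A lam \<eta> (Suc N) (y(N := z n))"
    by (rule almost_eigenfamily_extend[OF sa _ y zD zn]) (use yD eta n in auto)
  moreover have "\<forall>j. (y(N := z n)) j \<in> D" using yD zD by simp
  ultimately show ?case by blast
qed

text \<open>A nontrivial combination of card G + 1 members of an almost eigenfamily that is
  orthogonal to G is an approximate eigenvector.\<close>
lemma orthogonal_approx_eigvec: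
  assumes G: "finite G" and eps: "\<epsilon> > 0"
  shows "\<exists>w. approx_eigvec D A lam \<epsilon> w \<and> (\<forall>g\<in>G. inner g w = 0)"
proof -
  define N where "N = Suc (card G)"
  define \<eta> where "\<eta> = min (1/2) (\<epsilon>/2) / (real N * (1 + \<bar>lam\<bar>))"
  have pos: "real N * (1 + \<bar>lam\<bar>) > 0" by (simp add: N_def add_pos_nonneg)
  hence eta: "\<eta> > 0" using eps by (simp add: \<eta>_def)
  have "\<eta> * (N * (1 + \<bar>lam\<bar>)) = min (1/2) (\<epsilon>/2)" using pos by (simp add: \<eta>_def N_def)
  hence small2: "\<eta> * N * (1 + \<bar>lam\<bar>) \<le> \<epsilon> / 2" by (simp add: mult.assoc)
  have "\<eta> * N * 1 \<le> \<eta> * N * (1 + \<bar>lam\<bar>)" by (intro mult_left_mono) (use eta in auto)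
  hence small1: "\<eta> * N \<le> 1/2"
    using \<open>\<eta> * (N * (1 + \<bar>lam\<bar>)) = _\<close> min.cobounded1[of "1/2" "\<epsilon>/2"]
    by (simp only: mult.assoc mult_1_right)
  obtain y where yD: "\<forall>j. y j \<in> D" and y: "almost_eigenfamily A lam \<eta> N y"
    using almost_eigenfamily_exists[OF eta] by blast
  obtain a where a: "\<exists>j\<in>{..<N}. a j \<noteq> 0" "\<forall>g\<in>G. inner g (\<Sum>j<N. a j *\<^sub>R y j) = 0"
    using nontrivial_orthogonal_combination[OF G, of "{..<N}" y] by (auto simp: N_def)
  define w where "w = (\<Sum>j<N. a j *\<^sub>R y j)"
  define s where "s = (\<Sum>i<N. (a i)\<^sup>2)"
  have "s > 0"
  proof -
    obtain j where j: "j < N" "a j \<noteq> 0" using a(1) by auto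
    have "(a j)\<^sup>2 \<le> s" unfolding s_def by (rule member_le_sum) (use j in auto)
    moreover have "(a j)\<^sup>2 > 0" using j by simp
    ultimately show ?thesis by linarith
  qed
  note est = almost_eigenfamily_combination[OF sa yD[rule_format] y, of a, folded w_def s_def]
  have "(norm w)\<^sup>2 > 0" "\<bar>inner w (A w) - lam * (norm w)\<^sup>2\<bar> \<le> \<epsilon> * (norm w)\<^sup>2"
    by (rule rayleigh_perturbation[OF \<open>s > 0\<close> est(2,3) small1 small2])+
  thus ?thesis using est(1) a(2) unfolding approx_eigvec_def w_def by auto
qed

end

lemma has_orth_approx_eigvecs_if_weakly_null:
  "self_adjoint D A \<Longrightarrow> weakly_null_rayleigh_seq D A lam z \<Longrightarrow> has_orth_approx_eigvecs D A lam"
  unfolding has_orth_approx_eigvecs_def using orthogonal_approx_eigvec by blast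


section \<open>A graph-norm dense sequence in the domain\<close>

text \<open>In a separable space, every set D contains a sequence that is dense in D for the graph
  norm of any map A: approximate a pair of points of a countable dense set, at a rational
  scale, by a point of D whenever possible.\<close>
lemma graph_dense_sequence:
  fixes D :: "'a::real_normed_vector set" and A :: "'a \<Rightarrow> 'a"
  assumes sep: "\<exists>S :: 'a set. countable S \<and> closure S = UNIV" and D0: "0 \<in> D"
  shows "\<exists>e::nat \<Rightarrow> 'a. (\<forall>m. e m \<in> D) \<and>
     (\<forall>x\<in>D. \<forall>\<epsilon>>0. \<exists>m. norm (x - e m) + norm (A x - A (e m)) < \<epsilon>)"
proof -
  obtain S :: "'a set" where S: "countable S" "closure S = UNIV" using sep by blast
  have approx: "\<exists>s\<in>S. norm (y - s) < r" if "r > 0" for y r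
    using closure_approachable[of y S] S(2) that by (auto simp: dist_norm norm_minus_commute)
  define T where "T = S \<times> S \<times> (UNIV :: nat set)"
  have cT: "countable T" unfolding T_def using S(1) by simp
  define P where "P t d \<longleftrightarrow> d \<in> D \<and> norm (d - fst t) < inverse (real (snd (snd t)))
     \<and> norm (A d - fst (snd t)) < inverse (real (snd (snd t)))" for t d
  define pick where "pick t = (if \<exists>d. P t d then SOME d. P t d else 0)" for t
  have pickD: "pick t \<in> D" for t
    using someI_ex[of "P t"] D0 by (auto simp: pick_def P_def)
  have pickP: "\<exists>d. P t d \<Longrightarrow> P t (pick t)" for t
    using someI_ex[of "P t"] by (auto simp: pick_def)
  define e where "e m = pick (from_nat_into T m)" for m
  show ?thesis
  proof (intro exI[of _ e] conjI ballI allI impI)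
    show "e m \<in> D" for m by (simp add: e_def pickD)
  next
    fix x and \<epsilon> :: real assume x: "x \<in> D" and eps: "\<epsilon> > 0"
    obtain k where k: "inverse (real k) < \<epsilon> / 4" "k > 0"
      using ex_inverse_of_nat_less[of "\<epsilon> / 4"] eps by auto
    have r: "inverse (real k) > 0" using k by simp
    obtain s1 where s1: "s1 \<in> S" "norm (x - s1) < inverse (real k)" using approx[OF r] by blast
    obtain s2 where s2: "s2 \<in> S" "norm (A x - s2) < inverse (real k)" using approx[OF r] by blast
    define t where "t = (s1, s2, k)"
    have "t \<in> T" using s1 s2 by (simp add: t_def T_def)
    then obtain m where m: "from_nat_into T m = t" using from_nat_into_surj[OF cT] by blast
    have "P t x" using x s1 s2 by (simp add: P_def t_def norm_minus_commute)
    hence Pe: "P t (e m)" using pickP[of t] m by (auto simp: e_def)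
    have "norm (x - e m) \<le> norm (x - s1) + norm (e m - s1)"
      using norm_triangle_ineq4[of "x - s1" "e m - s1"] by simp
    moreover have "norm (A x - A (e m)) \<le> norm (A x - s2) + norm (A (e m) - s2)"
      using norm_triangle_ineq4[of "A x - s2" "A (e m) - s2"] by simp
    ultimately show "\<exists>m. norm (x - e m) + norm (A x - A (e m)) < \<epsilon>"
      using s1 s2 Pe k by (intro exI[of _ m]) (auto simp: P_def t_def)
  qed
qed

section \<open>A criterion for spurious eigenvalues\<close>

lemma rayleigh_quotient_in_compr_spectrum:
  assumes sa: "self_adjoint D A" and U: "U \<subseteq> D" and w: "w \<in> D" "w \<noteq> 0"
    and orth: "\<And>b. b \<in> U \<Longrightarrow> cinner b w = 0 \<and> cinner (A b) w = 0"
  shows "complex_of_real (inner w (A w) / (norm w)\<^sup>2) \<in> compr_spectrum (cspan (insert w U)) A"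
proof -
  define \<mu> where "\<mu> = inner w (A w) / (norm w)\<^sup>2"
  have mu: "\<mu> * (norm w)\<^sup>2 = inner w (A w)" using w(2) by (simp add: \<mu>_def)
  have wV: "w \<in> cspan (insert w U)" by (rule cspan_superset) simp
  have "cproj (cspan (insert w U)) (A w) = scaleC (complex_of_real \<mu>) w"
  proof (rule cproj_eqI[OF csubspace_cspan csubspace_scaleC[OF csubspace_cspan wV]])
    fix v assume "v \<in> cspan (insert w U)"
    thus "cinner v (A w - scaleC (complex_of_real \<mu>) w) = 0"
    proof (rule cspan_orth[rotated])
      fix b assume "b \<in> insert w U"
      then consider "b = w" | "b \<in> U" by blast
      thus "cinner b (A w - scaleC (complex_of_real \<mu>) w) = 0"
      proof cases
        case 1
        have "cinner w (scaleC (complex_of_real \<mu>) w) = complex_of_real (\<mu> * (norm w)\<^sup>2)"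
          using cinner_scaleC_right[of w "complex_of_real \<mu>" w] by (simp add: cinner_self)
        thus ?thesis using 1 mu cinner_A_real[OF sa w(1)] by (simp add: cinner_diff_right)
      next
        case 2
        hence "cinner b (A w) = 0" using orth sa_cinner[OF sa _ w(1), of b] U by auto
        thus ?thesis using orth[OF 2] cinner_scaleC_right[of b "complex_of_real \<mu>" w]
          by (simp add: cinner_diff_right)
      qed
    qed
  qed
  thus ?thesis unfolding compr_spectrum_def \<mu>_def using wV w(2) by blast
qed

lemma enlarge_by_approx_eigvec:
  assumes sa: "self_adjoint D A" and orth: "has_orth_approx_eigvecs D A lam"
    and U: "finite U" "U \<subseteq> D" and eps: "\<epsilon> > 0"
  shows "\<exists>w\<in>D. infdist (complex_of_real lam) (compr_spectrum (cspan (insert w U)) A) \<le> \<epsilon>"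
proof -
  text \<open>Complex orthogonality to U and A U is real orthogonality to this finite set.\<close>
  define G where "G = U \<union> cJ ` U \<union> A ` U \<union> cJ ` A ` U"
  have "finite G" using U(1) by (simp add: G_def)
  then obtain w where w: "approx_eigvec D A lam \<epsilon> w" and wG: "\<forall>g\<in>G. inner g w = 0"
    using orth eps unfolding has_orth_approx_eigvecs_def by blast
  hence wD: "w \<in> D" and w0: "w \<noteq> 0"
    and wb: "\<bar>inner w (A w) - lam * (norm w)\<^sup>2\<bar> \<le> \<epsilon> * (norm w)\<^sup>2"
    unfolding approx_eigvec_def by auto
  define \<mu> where "\<mu> = inner w (A w) / (norm w)\<^sup>2"
  have "complex_of_real \<mu> \<in> compr_spectrum (cspan (insert w U)) A"
    unfolding \<mu>_def using wG
    by (intro rayleigh_quotient_in_compr_spectrum[OF sa U(2) wD w0])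
      (auto simp: G_def cinner_eq_0_iff)
  moreover have "\<bar>\<mu> - lam\<bar> \<le> \<epsilon>"
  proof -
    have "(\<mu> - lam) * (norm w)\<^sup>2 = inner w (A w) - lam * (norm w)\<^sup>2"
      using w0 by (simp add: \<mu>_def left_diff_distrib)
    hence "\<bar>\<mu> - lam\<bar> * (norm w)\<^sup>2 = \<bar>inner w (A w) - lam * (norm w)\<^sup>2\<bar>"
      by (metis abs_mult abs_power2 power2_abs abs_norm_cancel)
    hence "\<bar>\<mu> - lam\<bar> * (norm w)\<^sup>2 \<le> \<epsilon> * (norm w)\<^sup>2" using wb by simp
    moreover have "(norm w)\<^sup>2 > 0" using w0 by simp
    ultimately show ?thesis by simp
  qed
  hence "dist (complex_of_real lam) (complex_of_real \<mu>) \<le> \<epsilon>"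
    by (simp add: dist_norm abs_minus_commute flip: of_real_diff)
  ultimately show ?thesis using wD infdist_le2 by blast
qed

lemma increasing_sets_with_close_eigenvalues:
  fixes e :: "nat \<Rightarrow> 'a::chilbert"
  assumes sa: "self_adjoint D A" and orth: "has_orth_approx_eigvecs D A lam"
    and eD: "\<And>m. e m \<in> D"
  shows "\<exists>B. \<forall>m. finite (B m) \<and> B m \<subseteq> D \<and> insert (e m) (B m) \<subseteq> B (Suc m) \<and>
    infdist (complex_of_real lam) (compr_spectrum (cspan (B (Suc m))) A) \<le> inverse (real (Suc m))"
proof -
  define good where "good m U w \<longleftrightarrow> w \<in> D \<and> infdist (complex_of_real lam)
      (compr_spectrum (cspan (insert w (insert (e m) U))) A) \<le> inverse (real (Suc m))"
    for m U w
  define B where "B = rec_nat {} (\<lambda>m U. insert (SOME w. good m U w) (insert (e m) U))"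
  have BS: "B (Suc m) = insert (SOME w. good m (B m) w) (insert (e m) (B m))" for m
    by (simp add: B_def)
  have grow: "good m U (SOME w. good m U w)" if "finite U" "U \<subseteq> D" for m U
  proof (rule someI_ex)
    show "\<exists>w. good m U w"
      using enlarge_by_approx_eigvec[OF sa orth, of "insert (e m) U" "inverse (real (Suc m))"]
        that eD
      by (auto simp: good_def)
  qed
  have B: "finite (B m) \<and> B m \<subseteq> D" for m
  proof (induction m)
    case (Suc m)
    thus ?case using grow[of "B m" m] eD by (simp add: BS good_def)
  qed (simp add: B_def)
  have "infdist (complex_of_real lam) (compr_spectrum (cspan (B (Suc m))) A)
      \<le> inverse (real (Suc m))" for m
    using grow[of "B m" m] B[of m] by (simp add: BS good_def)
  moreover have "insert (e m) (B m) \<subseteq> B (Suc m)" for m unfolding BS by blast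
  ultimately show ?thesis using B by blast
qed

text \<open>If orthogonal approximate eigenvectors exist, \<lambda> is a spurious eigenvalue unless it lies in
  the spectrum: take B_m as above for a graph-dense sequence e and V_m = span B_m.\<close>
lemma in_Spu_if_orth_approx_eigvecs:
  fixes D :: "'a::chilbert set"
  assumes sep: "\<exists>S :: 'a set. countable S \<and> closure S = UNIV"
    and sa: "self_adjoint D A" and orth: "has_orth_approx_eigvecs D A lam"
    and not_spec: "complex_of_real lam \<notin> op_spectrum D A"
  shows "lam \<in> Spu D A"
proof -
  have csD: "csubspace D" using csubspace_domain[OF sa] .
  obtain e :: "nat \<Rightarrow> 'a" where eD: "\<And>m. e m \<in> D" and edense: "\<And>x \<epsilon>. x \<in> D \<Longrightarrow> \<epsilon> > 0 \<Longrightarrow>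
      \<exists>m. norm (x - e m) + norm (A x - A (e m)) < \<epsilon>"
    using graph_dense_sequence[OF sep csubspace_0[OF csD], of A] by blast
  have "\<exists>B. \<forall>m. finite (B m) \<and> B m \<subseteq> D \<and> insert (e m) (B m) \<subseteq> B (Suc m) \<and>
    infdist (complex_of_real lam) (compr_spectrum (cspan (B (Suc m))) A) \<le> inverse (real (Suc m))"
    by (rule increasing_sets_with_close_eigenvalues[OF sa orth]) (rule eD)
  then obtain B where B: "\<And>m. finite (B m)" "\<And>m. B m \<subseteq> D" "\<And>m. insert (e m) (B m) \<subseteq> B (Suc m)"
    and close: "\<And>m. infdist (complex_of_real lam) (compr_spectrum (cspan (B (Suc m))) A)
      \<le> inverse (real (Suc m))"
    by metis
  define V where "V m = cspan (B m)" for m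
  have nested: "\<forall>n. fin_dim_csubspace (V n) \<and> V n \<subseteq> D \<and> V n \<subseteq> V (Suc n)"
  proof
    fix n
    have "fin_dim_csubspace (V n)" unfolding V_def fin_dim_csubspace_def using B(1) by blast
    moreover have "V n \<subseteq> D" unfolding V_def by (rule cspan_subset[OF csD B(2)])
    moreover have "V n \<subseteq> V (Suc n)" unfolding V_def by (rule cspan_mono) (use B(3)[of n] in blast)
    ultimately show "fin_dim_csubspace (V n) \<and> V n \<subseteq> D \<and> V n \<subseteq> V (Suc n)" by blast
  qed
  have dense: "\<forall>x\<in>D. \<forall>\<epsilon>>0. \<exists>n. \<exists>y\<in>V n. sqrt ((norm (x - y))\<^sup>2 + (norm (A x - A y))\<^sup>2) < \<epsilon>"
  proof (intro ballI allI impI)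
    fix x and \<epsilon> :: real assume "x \<in> D" "\<epsilon> > 0"
    then obtain m where m: "norm (x - e m) + norm (A x - A (e m)) < \<epsilon>" using edense by blast
    have "e m \<in> V (Suc m)" unfolding V_def using B(3)[of m] by (auto intro: cspan_superset)
    moreover have "sqrt ((norm (x - e m))\<^sup>2 + (norm (A x - A (e m)))\<^sup>2) < \<epsilon>"
      using sqrt_sum_squares_le_sum_abs[of "norm (x - e m)" "norm (A x - A (e m))"] m by simp
    ultimately show "\<exists>n. \<exists>y\<in>V n. sqrt ((norm (x - y))\<^sup>2 + (norm (A x - A y))\<^sup>2) < \<epsilon>" by blast
  qed
  have "(\<lambda>n. infdist (complex_of_real lam) (compr_spectrum (V n) A)) \<longlonglongrightarrow> 0"
  proof (rule LIMSEQ_imp_Suc, rule Lim_null_comparison)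
    show "\<forall>\<^sub>F n in sequentially. norm (infdist (complex_of_real lam) (compr_spectrum (V (Suc n)) A))
        \<le> inverse (real (Suc n))"
      using close by (simp add: V_def infdist_nonneg)
  qed (rule LIMSEQ_inverse_real_of_nat)
  thus ?thesis unfolding Spu_def using nested dense not_spec by blast
qed

theorem mainTheorem2:
  fixes D :: "'a::chilbert set" and A :: "'a \<Rightarrow> 'a"
    and K :: nat and x :: "nat \<Rightarrow> nat \<Rightarrow> 'a" and lam :: real
  assumes separable: "\<exists>S :: 'a set. countable S \<and> closure S = UNIV"
    and sa: "self_adjoint D A"
    and K: "K \<ge> 1"
    and inD: "\<And>n j. j \<in> {1..K} \<Longrightarrow> x n j \<in> D"
    and orthonormal: "\<And>n i j. i \<in> {1..K} \<Longrightarrow> j \<in> {1..K} \<Longrightarrow>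
          cinner (x n i) (x n j) = (if i = j then 1 else 0)"
    and weak0: "\<And>j y. j \<in> {1..K} \<Longrightarrow> (\<lambda>n. cinner y (x n j)) \<longlonglongrightarrow> 0"
    and lim: "(\<lambda>n. infdist (complex_of_real lam)
                 (compr_spectrum (cspan {x n j | j. j \<in> {1..K}}) A)) \<longlonglongrightarrow> 0"
  shows "lam \<in> Spu D A \<or> complex_of_real lam \<in> op_spectrum D A"
proof (cases "complex_of_real lam \<in> op_spectrum D A")
  case False
  have W: "{x n j | j. j \<in> {1..K}} = x n ` {1..K}" for n by auto
  have "orthonormal_on {1..K} (x n)" for n
    using orthonormal unfolding orthonormal_on_def by blast
  moreover have "x n ` {1..K} \<subseteq> D" for n using inD by blast
  ultimately obtain z where "weakly_null_rayleigh_seq D A lam z"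
    using weakly_null_rayleigh_seq_exists[OF sa K _ _ weak0 lim[unfolded W]] by blast
  hence "has_orth_approx_eigvecs D A lam"
    by (rule has_orth_approx_eigvecs_if_weakly_null[OF sa])
  thus ?thesis using in_Spu_if_orth_approx_eigvecs[OF separable sa _ False] by blast
qed simp

end
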